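(* Let $d\ge3$, $\Omega=\{1,\ldots,d\}$, and $F\le F'\le\mathrm{Sym}(\Omega)$ with $F'$ preserving the orbits of $F$, $F$ nontrivial and $F'$ 2-transitive on $\Omega$. Let $G^+\le G(F,F')$ be the subgroup of elements $g$ such that $d(v,gv)$ is even for some (equivalently every) vertex $v$ of $T$. Then there exists a geodesic line $L$ in $T$ whose set-wise stabilizer in $G^+$ contains an element translating $L$ by distance $2$ and an element fixing a vertex $v_0\in L$ and reversing the orientation of $L$; consequently the set-wise stabilizer of $L$ in $G^+$ acts transitively on the geometric edges of $L$.
   Context: Let $T=\mathcal{T}_d$ be the $d$-regular tree with a fixed edge coloring $c\colon E(T)\to\Omega$ whose restriction $c_v$ to the edges $E(v)$ at each vertex $v$ is a bijection onto $\Omega$. For $g\in\mathrm{Aut}(T)$, $\sigma(g,v)=c_{gv}\circ g_v\circ c_v^{-1}$ with $g_v\colon E(v)\to E(gv)$ induced by $g$. $U(F')=\{g:\sigma(g,v)\in F'\ \forall v\}$, $G(F)=\{g:\sigma(g,v)\in F$ for all but finitely many $v\}$, $G(F,F')=G(F)\cap U(F')$. A geometric edge of $L$ is an unordered pair of adjacent vertices of $L$. *)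

theory Defs
  imports Main "HOL-Combinatorics.Permutations"
begin

text \<open>Concrete model of the d-regular tree with a legal edge colouring:
 vertices are reduced words over \<Omega> = {1..d} (no two consecutive letters equal);
 w and w @ [i] are adjacent and the edge between them has colour i.\<close>

definition Omega :: "nat \<Rightarrow> nat set" where
  "Omega d = {1..d}"

definition verts :: "nat \<Rightarrow> nat list set" where
  "verts d = {w. set w \<subseteq> Omega d \<and> successively (\<noteq>) w}"

definition adj :: "nat list \<Rightarrow> nat list \<Rightarrow> bool" where
  "adj v w \<longleftrightarrow> (\<exists>i. w = v @ [i]) \<or> (\<exists>i. v = w @ [i])"

definition col :: "nat list \<Rightarrow> nat list \<Rightarrow> nat" where
  "col a b = (if b \<noteq> [] \<and> butlast b = a then last b else last a)"

definition nbr :: "nat list \<Rightarrow> nat \<Rightarrow> nat list" where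
  "nbr v i = (if v \<noteq> [] \<and> last v = i then butlast v else v @ [i])"

fun lcp :: "nat list \<Rightarrow> nat list \<Rightarrow> nat" where
  "lcp (x # xs) (y # ys) = (if x = y then Suc (lcp xs ys) else 0)"
| "lcp _ _ = 0"

definition tdist :: "nat list \<Rightarrow> nat list \<Rightarrow> nat" where
  "tdist v w = length v + length w - 2 * lcp v w"

definition Aut :: "nat \<Rightarrow> (nat list \<Rightarrow> nat list) set" where
  "Aut d = {g. bij_betw g (verts d) (verts d)
              \<and> (\<forall>v\<in>verts d. \<forall>w\<in>verts d. adj v w \<longleftrightarrow> adj (g v) (g w))
              \<and> (\<forall>x. x \<notin> verts d \<longrightarrow> g x = x)}"

text \<open>local action sigma(g,v) = c_{gv} o g_v o c_v^{-1}, a permutation of Omega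
 (extended by the identity outside Omega)\<close>
definition sigma :: "nat \<Rightarrow> (nat list \<Rightarrow> nat list) \<Rightarrow> nat list \<Rightarrow> nat \<Rightarrow> nat" where
  "sigma d g v i = (if i \<in> Omega d then col (g v) (g (nbr v i)) else i)"

definition perm_group :: "nat \<Rightarrow> (nat \<Rightarrow> nat) set \<Rightarrow> bool" where
  "perm_group d F \<longleftrightarrow> F \<subseteq> {p. p permutes Omega d} \<and> id \<in> F
     \<and> (\<forall>p\<in>F. \<forall>q\<in>F. p \<circ> q \<in> F) \<and> (\<forall>p\<in>F. inv p \<in> F)"

definition orbit_of :: "(nat \<Rightarrow> nat) set \<Rightarrow> nat \<Rightarrow> nat set" where
  "orbit_of F x = (\<lambda>p. p x) ` F"

definition preserves_orbits :: "nat \<Rightarrow> (nat \<Rightarrow> nat) set \<Rightarrow> (nat \<Rightarrow> nat) set \<Rightarrow> bool" where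
  "preserves_orbits d F F' \<longleftrightarrow> (\<forall>a\<in>F'. \<forall>x\<in>Omega d. a ` orbit_of F x = orbit_of F x)"

definition two_transitive :: "nat \<Rightarrow> (nat \<Rightarrow> nat) set \<Rightarrow> bool" where
  "two_transitive d F' \<longleftrightarrow> (\<forall>x\<in>Omega d. \<forall>y\<in>Omega d. \<forall>x'\<in>Omega d. \<forall>y'\<in>Omega d.
      x \<noteq> y \<longrightarrow> x' \<noteq> y' \<longrightarrow> (\<exists>a\<in>F'. a x = x' \<and> a y = y'))"

definition U_grp :: "nat \<Rightarrow> (nat \<Rightarrow> nat) set \<Rightarrow> (nat list \<Rightarrow> nat list) set" where
  "U_grp d F' = {g\<in>Aut d. \<forall>v\<in>verts d. sigma d g v \<in> F'}"

definition G_grp :: "nat \<Rightarrow> (nat \<Rightarrow> nat) set \<Rightarrow> (nat list \<Rightarrow> nat list) set" where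
  "G_grp d F = {g\<in>Aut d. finite {v\<in>verts d. sigma d g v \<notin> F}}"

definition GFF :: "nat \<Rightarrow> (nat \<Rightarrow> nat) set \<Rightarrow> (nat \<Rightarrow> nat) set \<Rightarrow> (nat list \<Rightarrow> nat list) set" where
  "GFF d F F' = G_grp d F \<inter> U_grp d F'"

definition Gplus :: "nat \<Rightarrow> (nat \<Rightarrow> nat) set \<Rightarrow> (nat \<Rightarrow> nat) set \<Rightarrow> (nat list \<Rightarrow> nat list) set" where
  "Gplus d F F' = {g\<in>GFF d F F'. \<exists>v\<in>verts d. even (tdist v (g v))}"

definition geodesic_line :: "nat \<Rightarrow> (int \<Rightarrow> nat list) \<Rightarrow> bool" where
  "geodesic_line d l \<longleftrightarrow> (\<forall>n. l n \<in> verts d) \<and> (\<forall>m n. int (tdist (l m) (l n)) = \<bar>m - n\<bar>)"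

definition geom_edges :: "nat list set \<Rightarrow> nat list set set" where
  "geom_edges L = {{a, b} | a b. a \<in> L \<and> b \<in> L \<and> adj a b}"

end

theory Submission
  imports Defs
begin

text \<open>Take b \<in> F and a colour x with y = b x \<noteq> x, and let z = b y. Consider the line whose
  non-negative half is the word y x y x \<dots> and whose negative half is its image z y z y \<dots> under b.
  An automorphism fixing the root that acts by a \<in> F' (swapping y and z) at the root and uniformly by
  some B c \<in> F with B c c = a c on the branch of colour c reverses this line when B y = b and
  B z = b\<inverse>; such B exist because F' preserves the F-orbits, and the automorphism lies in G(F,F')
  since its local action leaves F only at the root. The same construction on the line x y x \<dots>,
  conjugated by the colour-preserving automorphism w \<mapsto> y w (left multiplication in the free product
  of d copies of Z/2), reflects the first line at its vertex [y]. The product of the two reflections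
  translates the line by 2, and the even translations together with their products with a
  reflection act transitively on the edges of the line.\<close>

lemma verts_snoc_iff:
  "v @ [i] \<in> verts d \<longleftrightarrow> v \<in> verts d \<and> i \<in> Omega d \<and> (v = [] \<or> last v \<noteq> i)"
  by (auto simp: verts_def successively_append_iff)

lemma verts_appendD: "v @ w \<in> verts d \<Longrightarrow> v \<in> verts d"
  by (auto simp: verts_def successively_append_iff)

lemma verts_Cons_iff:
  "c # w \<in> verts d \<longleftrightarrow> w \<in> verts d \<and> c \<in> Omega d \<and> (w = [] \<or> hd w \<noteq> c)"
  by (auto simp: verts_def successively_Cons)

lemma finite_Omega: "finite (Omega d)"
  by (simp add: Omega_def)

lemma col_snoc [simp]: "col a (a @ [i]) = i"
  by (simp add: col_def)

lemma butlast_neq_snoc [simp]: "butlast b \<noteq> b @ [i]"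
  by (metis length_append_singleton length_butlast lessI diff_less_Suc not_less_eq)

lemma col_snoc_parent [simp]: "col (b @ [i]) b = i"
  by (simp add: col_def)

lemma nbr_in_verts: "v \<in> verts d \<Longrightarrow> i \<in> Omega d \<Longrightarrow> nbr v i \<in> verts d"
  by (cases "v \<noteq> [] \<and> last v = i")
     (metis append_butlast_last_id nbr_def verts_appendD, auto simp: nbr_def verts_snoc_iff)

lemma adj_nbr: "adj v (nbr v i)"
  unfolding nbr_def adj_def by (metis append_butlast_last_id)

lemma col_nbr: "col v (nbr v i) = i"
  unfolding nbr_def using col_snoc_parent[of "butlast v" "last v"] by (auto simp del: col_snoc_parent)

lemma nbr_col: "v \<in> verts d \<Longrightarrow> w \<in> verts d \<Longrightarrow> adj v w \<Longrightarrow> nbr v (col v w) = w"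
  unfolding adj_def by (auto simp: nbr_def col_def verts_snoc_iff)

lemma col_in_Omega: "v \<in> verts d \<Longrightarrow> w \<in> verts d \<Longrightarrow> adj v w \<Longrightarrow> col v w \<in> Omega d"
  unfolding adj_def by (metis col_snoc col_snoc_parent verts_snoc_iff)

lemma adj_sym: "adj v w \<longleftrightarrow> adj w v"
  unfolding adj_def by auto

lemma Aut_bij: "g \<in> Aut d \<Longrightarrow> bij_betw g (verts d) (verts d)"
  by (simp add: Aut_def)

lemma Aut_in_verts: "g \<in> Aut d \<Longrightarrow> v \<in> verts d \<Longrightarrow> g v \<in> verts d"
  by (rule bij_betw_apply[OF Aut_bij])

lemma Aut_adj_iff: "g \<in> Aut d \<Longrightarrow> v \<in> verts d \<Longrightarrow> w \<in> verts d \<Longrightarrow> adj (g v) (g w) \<longleftrightarrow> adj v w"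
  by (simp add: Aut_def)

lemma Aut_inj_on: "g \<in> Aut d \<Longrightarrow> inj_on g (verts d)"
  using Aut_bij bij_betw_def by blast

lemma id_in_Aut: "id \<in> Aut d"
  unfolding Aut_def by simp

lemma Aut_comp:
  assumes "g \<in> Aut d" "h \<in> Aut d"
  shows "g \<circ> h \<in> Aut d"
proof -
  have "bij_betw (g \<circ> h) (verts d) (verts d)"
    using bij_betw_trans[OF Aut_bij[OF assms(2)] Aut_bij[OF assms(1)]] .
  moreover have "adj v w \<longleftrightarrow> adj ((g \<circ> h) v) ((g \<circ> h) w)" if "v \<in> verts d" "w \<in> verts d" for v w
    using that Aut_adj_iff[OF assms(2)] Aut_adj_iff[OF assms(1)] Aut_in_verts[OF assms(2)] by simp
  moreover have "\<forall>x. x \<notin> verts d \<longrightarrow> (g \<circ> h) x = x"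
    using assms by (simp add: Aut_def)
  ultimately show ?thesis unfolding Aut_def by simp
qed

lemma Aut_nbr:
  assumes "g \<in> Aut d" "v \<in> verts d" "i \<in> Omega d"
  shows "g (nbr v i) = nbr (g v) (sigma d g v i) \<and> sigma d g v i \<in> Omega d"
proof -
  have n: "nbr v i \<in> verts d" using assms nbr_in_verts by blast
  have a: "adj (g v) (g (nbr v i))" using Aut_adj_iff[OF assms(1,2) n] adj_nbr by blast
  have gv: "g v \<in> verts d" "g (nbr v i) \<in> verts d" using Aut_in_verts assms n by blast+
  show ?thesis using nbr_col[OF gv a] col_in_Omega[OF gv a] assms(3) by (simp add: sigma_def)
qed

lemma sigma_comp:
  assumes "g \<in> Aut d" "h \<in> Aut d" "v \<in> verts d"
  shows "sigma d (g \<circ> h) v = sigma d g (h v) \<circ> sigma d h v"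
proof
  fix i
  show "sigma d (g \<circ> h) v i = (sigma d g (h v) \<circ> sigma d h v) i"
  proof (cases "i \<in> Omega d")
    case True
    with Aut_nbr[OF assms(2,3)] show ?thesis by (simp add: sigma_def)
  qed (simp add: sigma_def)
qed

lemma sigma_id: "sigma d id v = id"
  by (rule ext) (simp add: sigma_def col_nbr)

lemma snoc_compatible_adj_back:
  assumes I: "inj_on g (verts d)" and Lg: "\<forall>w\<in>verts d. length (g w) = length w"
    and S: "\<forall>v i. v @ [i] \<in> verts d \<longrightarrow> g (v @ [i]) = g v @ [\<phi> v i]"
    and v: "v \<in> verts d" and w: "w \<in> verts d" and e: "g w = g v @ [j]"
  shows "\<exists>i. w = v @ [i]"
proof -
  have "w \<noteq> []" using e Lg v w by (metis length_append_singleton list.size(3) nat.distinct(1))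
  then have ww: "w = butlast w @ [last w]" by simp
  then have bw: "butlast w \<in> verts d" using w verts_appendD by metis
  have "g w = g (butlast w) @ [\<phi> (butlast w) (last w)]" using S w ww by metis
  then have "g (butlast w) = g v" using e by simp
  then have "butlast w = v" using I bw v inj_on_def by metis
  then show ?thesis using ww by metis
qed

lemma snoc_compatible_in_Aut:
  assumes V: "\<forall>w\<in>verts d. g w \<in> verts d" and I: "inj_on g (verts d)"
    and Lg: "\<forall>w\<in>verts d. length (g w) = length w"
    and O: "\<forall>x. x \<notin> verts d \<longrightarrow> g x = x"
    and S: "\<forall>v i. v @ [i] \<in> verts d \<longrightarrow> g (v @ [i]) = g v @ [\<phi> v i]"
  shows "g \<in> Aut d"
proof -
  have "w \<in> g ` verts d" if w: "w \<in> verts d" for w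
  proof -
    define A where "A = {x\<in>verts d. length x = length w}"
    have "A \<subseteq> {xs. set xs \<subseteq> Omega d \<and> length xs = length w}" unfolding A_def verts_def by auto
    then have "finite A" using finite_lists_length_eq[OF finite_Omega] finite_subset by blast
    moreover have "g ` A \<subseteq> A" unfolding A_def using V Lg by auto
    moreover have "inj_on g A" using I unfolding A_def by (rule inj_on_subset) auto
    ultimately have "g ` A = A" using endo_inj_surj by blast
    then show ?thesis using w unfolding A_def by blast
  qed
  then have "bij_betw g (verts d) (verts d)" unfolding bij_betw_def using I V by blast
  moreover have "adj v w \<longleftrightarrow> adj (g v) (g w)" if v: "v \<in> verts d" and w: "w \<in> verts d" for v w
  proof
    show "adj v w \<Longrightarrow> adj (g v) (g w)" unfolding adj_def using S v w by metis
    show "adj (g v) (g w) \<Longrightarrow> adj v w"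
      unfolding adj_def using snoc_compatible_adj_back[OF I Lg S] v w by metis
  qed
  ultimately show ?thesis unfolding Aut_def using O by blast
qed

lemma sigma_snoc_compatible:
  assumes S: "\<forall>v i. v @ [i] \<in> verts d \<longrightarrow> g (v @ [i]) = g v @ [\<phi> v i]"
    and v: "v \<in> verts d" and i: "i \<in> Omega d"
  shows "sigma d g v i = (if v \<noteq> [] \<and> last v = i then \<phi> (butlast v) i else \<phi> v i)"
proof (cases "v \<noteq> [] \<and> last v = i")
  case True
  then have "v = butlast v @ [i]" by (metis append_butlast_last_id)
  then have "g v = g (butlast v) @ [\<phi> (butlast v) i]" using S v by metis
  then show ?thesis using True i by (simp add: sigma_def nbr_def)
next
  case False
  then have n: "nbr v i = v @ [i]" by (auto simp: nbr_def)
  then have "g (v @ [i]) = g v @ [\<phi> v i]" using S nbr_in_verts[OF v i] by simp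
  then have "sigma d g v i = \<phi> v i" using i n by (simp add: sigma_def)
  then show ?thesis by (simp only: if_not_P[OF False])
qed

lemma perm_group_comp: "perm_group d F \<Longrightarrow> p \<in> F \<Longrightarrow> q \<in> F \<Longrightarrow> p \<circ> q \<in> F"
  unfolding perm_group_def by blast

lemma perm_group_id: "perm_group d F \<Longrightarrow> id \<in> F"
  unfolding perm_group_def by blast

lemma perm_group_inv: "perm_group d F \<Longrightarrow> p \<in> F \<Longrightarrow> inv p \<in> F"
  unfolding perm_group_def by blast

lemma perm_group_permutes: "perm_group d F \<Longrightarrow> p \<in> F \<Longrightarrow> p permutes Omega d"
  unfolding perm_group_def by blast

lemma perm_group_nontrivial_moves:
  assumes F: "perm_group d F" and "F \<noteq> {id}"
  obtains b x where "b \<in> F" "x \<in> Omega d" "b x \<noteq> x"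
proof -
  obtain b where b: "b \<in> F" "b \<noteq> id" using assms perm_group_id[OF F] by blast
  then have "\<exists>x\<in>Omega d. b x \<noteq> x"
    using permutes_not_in[OF perm_group_permutes[OF F b(1)]] by (metis eq_id_iff)
  then show ?thesis using that b by blast
qed

lemma GFF_Aut: "g \<in> GFF d F F' \<Longrightarrow> g \<in> Aut d"
  by (simp add: GFF_def G_grp_def)

lemma GFF_comp:
  assumes F: "perm_group d F" and F': "perm_group d F'"
    and g: "g \<in> GFF d F F'" and h: "h \<in> GFF d F F'"
  shows "g \<circ> h \<in> GFF d F F'"
proof -
  have ga: "g \<in> Aut d" and ha: "h \<in> Aut d" using g h GFF_Aut by blast+
  have "sigma d (g \<circ> h) v \<in> F'" if v: "v \<in> verts d" for v
  proof -
    have "sigma d g (h v) \<in> F'" "sigma d h v \<in> F'"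
      using g h v Aut_in_verts[OF ha v] by (auto simp: GFF_def U_grp_def)
    then show ?thesis using sigma_comp[OF ga ha v] perm_group_comp[OF F'] by simp
  qed
  moreover
  define Bg where "Bg = {w\<in>verts d. sigma d g w \<notin> F}"
  define Bh where "Bh = {v\<in>verts d. sigma d h v \<notin> F}"
  have "{v\<in>verts d. sigma d (g \<circ> h) v \<notin> F} \<subseteq> Bh \<union> (h -` Bg \<inter> verts d)"
    unfolding Bg_def Bh_def
    using sigma_comp[OF ga ha] perm_group_comp[OF F] Aut_in_verts[OF ha] by auto
  moreover have "finite Bg" "finite Bh" using g h by (auto simp: GFF_def G_grp_def Bg_def Bh_def)
  then have "finite (Bh \<union> (h -` Bg \<inter> verts d))"
    using finite_vimage_IntI[OF _ Aut_inj_on[OF ha]] by blast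
  ultimately show ?thesis
    using Aut_comp[OF ga ha] finite_subset unfolding GFF_def G_grp_def U_grp_def by blast
qed

lemma sigma_id_GFF:
  assumes "perm_group d F" "perm_group d F'" "g \<in> Aut d" "\<And>v. v \<in> verts d \<Longrightarrow> sigma d g v = id"
  shows "g \<in> GFF d F F'"
proof -
  have "{v\<in>verts d. sigma d g v \<notin> F} = {}" using assms(4) perm_group_id[OF assms(1)] by auto
  then have "finite {v\<in>verts d. sigma d g v \<notin> F}" by (simp only: finite.emptyI)
  moreover have "\<forall>v\<in>verts d. sigma d g v \<in> F'" using assms(4) perm_group_id[OF assms(2)] by simp
  ultimately show ?thesis using assms(3) unfolding GFF_def G_grp_def U_grp_def by blast
qed

lemma id_GFF: "perm_group d F \<Longrightarrow> perm_group d F' \<Longrightarrow> id \<in> GFF d F F'"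
  by (rule sigma_id_GFF) (simp_all add: id_in_Aut sigma_id)

section \<open>Automorphisms fixing the root\<close>

text \<open>The automorphism fixing the root [] whose local action is a at the root and B c at every
  other vertex of the branch through [c].\<close>

definition root_aut :: "nat \<Rightarrow> (nat \<Rightarrow> nat) \<Rightarrow> (nat \<Rightarrow> nat \<Rightarrow> nat) \<Rightarrow> nat list \<Rightarrow> nat list" where
  "root_aut d a B w = (if w \<in> verts d then (case w of [] \<Rightarrow> [] | c # r \<Rightarrow> a c # map (B c) r) else w)"

locale root_aut_data =
  fixes d :: nat and a :: "nat \<Rightarrow> nat" and B :: "nat \<Rightarrow> nat \<Rightarrow> nat"
  assumes a_permutes: "a permutes Omega d"
    and B_permutes: "\<And>c. c \<in> Omega d \<Longrightarrow> B c permutes Omega d"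
    and B_diag: "\<And>c. c \<in> Omega d \<Longrightarrow> B c c = a c"
begin

abbreviation "R \<equiv> root_aut d a B"

lemma root_aut_Nil: "R [] = []"
  by (simp add: root_aut_def verts_def)

lemma root_aut_Cons: "c # r \<in> verts d \<Longrightarrow> R (c # r) = a c # map (B c) r"
  by (simp add: root_aut_def)

lemma root_aut_in_verts:
  assumes w: "w \<in> verts d"
  shows "R w \<in> verts d"
proof (cases w)
  case (Cons c r)
  then have c: "c \<in> Omega d" and r: "r \<in> verts d" and h: "r = [] \<or> hd r \<noteq> c"
    using w verts_Cons_iff by auto
  have ij: "inj (B c)" using B_permutes[OF c] permutes_inj by blast
  have "map (B c) r \<in> verts d"
    using r B_permutes[OF c] ij unfolding verts_def
    by (auto simp: successively_map permutes_in_image inj_eq elim!: successively_mono)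
  moreover have "map (B c) r = [] \<or> hd (map (B c) r) \<noteq> a c"
    using h ij B_diag[OF c] by (cases r) (auto, metis injD)
  ultimately show ?thesis
    using Cons w root_aut_Cons a_permutes c verts_Cons_iff by (simp add: permutes_in_image)
qed (simp add: root_aut_Nil verts_def)

lemma length_root_aut: "w \<in> verts d \<Longrightarrow> length (R w) = length w"
  by (cases w) (auto simp: root_aut_Nil root_aut_Cons)

lemma inj_on_root_aut: "inj_on R (verts d)"
proof (rule inj_onI)
  fix v w assume v: "v \<in> verts d" and w: "w \<in> verts d" and e: "R v = R w"
  show "v = w"
  proof (cases v)
    case Nil then show ?thesis using e length_root_aut v w by (metis length_0_conv)
  next
    case (Cons c r)
    then obtain c' r' where w': "w = c' # r'"
      using e length_root_aut v w by (metis length_0_conv neq_Nil_conv)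
    have "a c = a c'" "map (B c) r = map (B c') r'" using e Cons w' root_aut_Cons v w by auto
    moreover have "inj (B c)" using B_permutes permutes_inj Cons v verts_Cons_iff by blast
    ultimately show ?thesis using Cons w' permutes_inj[OF a_permutes] by (simp add: inj_eq)
  qed
qed

lemma root_aut_snoc:
  "\<forall>v i. v @ [i] \<in> verts d \<longrightarrow> R (v @ [i]) = R v @ [if v = [] then a i else B (hd v) i]"
proof (intro allI impI)
  fix v i assume vi: "v @ [i] \<in> verts d"
  then show "R (v @ [i]) = R v @ [if v = [] then a i else B (hd v) i]"
    using root_aut_Cons root_aut_Nil verts_appendD[of v "[i]"] by (cases v) auto
qed

lemma root_aut_in_Aut: "R \<in> Aut d"
proof (rule snoc_compatible_in_Aut[OF _ inj_on_root_aut _ _ root_aut_snoc])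
  show "\<forall>w\<in>verts d. R w \<in> verts d" using root_aut_in_verts by blast
  show "\<forall>w\<in>verts d. length (R w) = length w" using length_root_aut by blast
qed (simp add: root_aut_def)

lemma sigma_root_aut: "v \<in> verts d \<Longrightarrow> sigma d R v = (if v = [] then a else B (hd v))"
proof (rule ext)
  fix i assume v: "v \<in> verts d"
  show "sigma d R v i = (if v = [] then a else B (hd v)) i"
  proof (cases "i \<in> Omega d")
    case iO: True
    note s = sigma_snoc_compatible[OF root_aut_snoc v iO]
    show ?thesis
    proof (cases "v \<noteq> [] \<and> last v = i" rule: case_split[case_names last other])
      case last
      show ?thesis
      proof (cases "butlast v = []")
        case True
        then have "v = [i]" using last by (metis append_butlast_last_id append_Nil)
        then show ?thesis using s B_diag[OF iO] True by simp
      next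
        case False
        then have "hd (butlast v) = hd v" using last by (metis append_butlast_last_id hd_append2)
        then show ?thesis using s last False by simp
      qed
    qed (use s in auto)
  next
    case False
    then have "a i = i" "v \<noteq> [] \<Longrightarrow> B (hd v) i = i"
      using permutes_not_in[OF a_permutes] permutes_not_in[OF B_permutes] v verts_Cons_iff
      by (auto simp: neq_Nil_conv)
    then show ?thesis using False by (simp add: sigma_def)
  qed
qed

lemma root_aut_GFF:
  assumes "a \<in> F'" "\<And>c. c \<in> Omega d \<Longrightarrow> B c \<in> F" "F \<subseteq> F'"
  shows "R \<in> GFF d F F'"
proof -
  have hd: "v \<in> verts d \<Longrightarrow> v \<noteq> [] \<Longrightarrow> hd v \<in> Omega d" for v
    using verts_Cons_iff by (cases v) auto
  have "\<forall>v\<in>verts d. sigma d R v \<in> F'" using sigma_root_aut assms hd by auto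
  moreover have "{v\<in>verts d. sigma d R v \<notin> F} \<subseteq> {[]}"
    using sigma_root_aut assms hd by (auto split: if_splits)
  then have "finite {v\<in>verts d. sigma d R v \<notin> F}" using finite_subset by blast
  ultimately show ?thesis using root_aut_in_Aut unfolding GFF_def G_grp_def U_grp_def by blast
qed

end

section \<open>Left multiplication by a generator\<close>

definition lmul :: "nat \<Rightarrow> nat \<Rightarrow> nat list \<Rightarrow> nat list" where
  "lmul d c w = (if w \<in> verts d then (if w \<noteq> [] \<and> hd w = c then tl w else c # w) else w)"

lemma lmul_in_verts: "c \<in> Omega d \<Longrightarrow> w \<in> verts d \<Longrightarrow> lmul d c w \<in> verts d"
  by (cases w) (auto simp: lmul_def verts_Cons_iff)

lemma lmul_lmul: "c \<in> Omega d \<Longrightarrow> w \<in> verts d \<Longrightarrow> lmul d c (lmul d c w) = w"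
  by (cases w) (auto simp: lmul_def verts_Cons_iff)

lemma lmul_Nil: "lmul d c [] = [c]"
  by (simp add: lmul_def verts_def)

lemma lmul_snoc:
  "v @ [i] \<in> verts d \<Longrightarrow> lmul d c (v @ [i]) = (if v = [] \<and> i = c then [] else lmul d c v @ [i])"
  using verts_appendD[of v "[i]" d] by (cases v) (auto simp: lmul_def)

lemma lmul_in_Aut:
  assumes c: "c \<in> Omega d"
  shows "lmul d c \<in> Aut d"
proof -
  have "bij_betw (lmul d c) (verts d) (verts d)"
    by (rule bij_betw_byWitness[where f'="lmul d c"]) (auto simp: lmul_lmul lmul_in_verts c)
  moreover have "adj (lmul d c v) (lmul d c w)" if "v \<in> verts d" "w \<in> verts d" "adj v w" for v w
  proof -
    have "adj (lmul d c v) (lmul d c (v @ [i]))" if "v @ [i] \<in> verts d" for v i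
      using lmul_snoc[OF that] lmul_Nil unfolding adj_def by auto
    then show ?thesis using that adj_sym unfolding adj_def by metis
  qed
  then have "\<forall>v\<in>verts d. \<forall>w\<in>verts d. adj v w \<longleftrightarrow> adj (lmul d c v) (lmul d c w)"
    using lmul_lmul[OF c] lmul_in_verts[OF c] by metis
  ultimately show ?thesis unfolding Aut_def by (simp add: lmul_def)
qed

lemma sigma_lmul:
  assumes v: "v \<in> verts d"
  shows "sigma d (lmul d c) v = id"
proof (rule ext)
  fix i
  show "sigma d (lmul d c) v i = id i"
  proof (cases "i \<in> Omega d")
    case True
    have nv: "nbr v i \<in> verts d" using nbr_in_verts v True by blast
    show ?thesis
    proof (cases "v \<noteq> [] \<and> last v = i")
      case T: True
      then have "v = nbr v i @ [i]" by (auto simp: nbr_def)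
      then have "lmul d c v = (if nbr v i = [] \<and> i = c then [] else lmul d c (nbr v i) @ [i])"
        using lmul_snoc v by metis
      then show ?thesis using True lmul_Nil by (auto simp: sigma_def col_def)
    next
      case False
      then have "nbr v i = v @ [i]" by (auto simp: nbr_def)
      then have "lmul d c (nbr v i) = (if v = [] \<and> i = c then [] else lmul d c v @ [i])"
        using lmul_snoc nv by metis
      then show ?thesis using True lmul_Nil by (auto simp: sigma_def col_def)
    qed
  qed (simp add: sigma_def)
qed

lemma lmul_GFF:
  "perm_group d F \<Longrightarrow> perm_group d F' \<Longrightarrow> c \<in> Omega d \<Longrightarrow> lmul d c \<in> GFF d F F'"
  by (rule sigma_id_GFF) (simp_all add: lmul_in_Aut sigma_lmul)

section \<open>A line reversed by a root automorphism\<close>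

fun alt_word :: "nat \<Rightarrow> nat \<Rightarrow> nat \<Rightarrow> nat list" where
  "alt_word u v 0 = []"
| "alt_word u v (Suc n) = u # alt_word v u n"

definition twisted_line :: "(nat \<Rightarrow> nat) \<Rightarrow> nat \<Rightarrow> nat \<Rightarrow> int \<Rightarrow> nat list" where
  "twisted_line b u v n =
     (if n \<ge> 0 then alt_word u v (nat n) else alt_word (b u) (b v) (nat (-n)))"

lemma map_alt_word: "map f (alt_word u v n) = alt_word (f u) (f v) n"
  by (induction n arbitrary: u v) auto

lemma length_alt_word [simp]: "length (alt_word u v n) = n"
  by (induction n arbitrary: u v) auto

lemma hd_alt_word: "n > 0 \<Longrightarrow> hd (alt_word u v n) = u"
  by (cases n) auto

lemma alt_word_in_verts: "u \<in> Omega d \<Longrightarrow> v \<in> Omega d \<Longrightarrow> u \<noteq> v \<Longrightarrow> alt_word u v n \<in> verts d"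
proof (induction n arbitrary: u v)
  case (Suc n)
  moreover have "alt_word v u n = [] \<or> hd (alt_word v u n) \<noteq> u"
    using Suc.prems hd_alt_word by (cases n) auto
  ultimately show ?case using verts_Cons_iff by simp
qed (simp add: verts_def)

lemma alt_word_prefix: "m \<le> n \<Longrightarrow> \<exists>ys. alt_word u v n = alt_word u v m @ ys"
proof (induction m arbitrary: n u v)
  case (Suc m)
  then obtain n' where "n = Suc n'" "m \<le> n'" by (cases n) auto
  then show ?case using Suc.IH[of n' v u] by auto
qed simp

lemma lcp_append_self: "lcp xs (xs @ ys) = length xs"
  by (induction xs) auto

lemma lcp_commute: "lcp xs ys = lcp ys xs"
  by (induction xs ys rule: lcp.induct) auto

lemma tdist_commute: "tdist v w = tdist w v"
  by (simp add: tdist_def lcp_commute)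

lemma tdist_append_self: "tdist xs (xs @ ys) = length ys"
  by (simp add: tdist_def lcp_append_self)

lemma tdist_hd_neq: "xs = [] \<or> ys = [] \<or> hd xs \<noteq> hd ys \<Longrightarrow> tdist xs ys = length xs + length ys"
  by (cases xs; cases ys) (auto simp: tdist_def)

lemma tdist_adj: "adj v w \<Longrightarrow> tdist v w = 1"
  unfolding adj_def using tdist_append_self tdist_commute by (metis One_nat_def length_Cons list.size(3))

lemma tdist_alt_word: "int (tdist (alt_word u v m) (alt_word u v n)) = \<bar>int m - int n\<bar>"
proof -
  have "int (tdist (alt_word u v m) (alt_word u v n)) = int n - int m" if "m \<le> n" for m n
  proof -
    obtain ys where "alt_word u v n = alt_word u v m @ ys" using alt_word_prefix \<open>m \<le> n\<close> by blast
    moreover then have "length ys = n - m" by (metis add_diff_cancel_left' length_alt_word length_append)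
    ultimately show ?thesis using that by (simp add: tdist_append_self)
  qed
  then show ?thesis using tdist_commute by (metis abs_minus_commute abs_of_nonneg diff_ge_0_iff_ge nat_le_linear of_nat_le_iff)
qed

lemma twisted_line_geodesic:
  assumes u: "u \<in> Omega d" and v: "v \<in> Omega d" and uv: "u \<noteq> v"
    and b: "b permutes Omega d" and bu: "b u \<noteq> u"
  shows "geodesic_line d (twisted_line b u v)"
proof -
  have bu': "b u \<in> Omega d" "b v \<in> Omega d" using b u v by (auto simp: permutes_in_image)
  have bv: "b u \<noteq> b v" using uv permutes_inj[OF b] by (auto dest: injD)
  have mixed: "int (tdist (alt_word u v m) (alt_word (b u) (b v) n)) = int m + int n" for m n
    by (subst tdist_hd_neq) (metis hd_alt_word bu length_alt_word gr0I length_0_conv, simp)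
  have "int (tdist (twisted_line b u v m) (twisted_line b u v n)) = \<bar>m - n\<bar>" for m n
    using tdist_alt_word mixed tdist_commute by (simp add: twisted_line_def abs_minus_commute)
  moreover have "twisted_line b u v n \<in> verts d" for n
    using alt_word_in_verts[OF u v uv] alt_word_in_verts[OF bu' bv] by (simp add: twisted_line_def)
  ultimately show ?thesis unfolding geodesic_line_def by blast
qed

lemma preserves_orbits_witness:
  assumes "perm_group d F" "preserves_orbits d F F'" "a \<in> F'" "c \<in> Omega d"
  shows "\<exists>p\<in>F. p c = a c"
proof -
  have "c \<in> orbit_of F c" using perm_group_id[OF assms(1)] unfolding orbit_of_def by (metis id_apply image_eqI)
  then have "a c \<in> orbit_of F c" using assms(2-4) unfolding preserves_orbits_def by blast
  then show ?thesis unfolding orbit_of_def by auto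
qed

lemma twisted_line_reflection:
  assumes F: "perm_group d F" and F': "perm_group d F'" and FF: "F \<subseteq> F'"
    and po: "preserves_orbits d F F'" and tt: "two_transitive d F'"
    and u: "u \<in> Omega d" and v: "v \<in> Omega d" and uv: "u \<noteq> v"
    and b: "b \<in> F" and bu: "b u \<noteq> u"
  shows "\<exists>R\<in>GFF d F F'. \<forall>n. R (twisted_line b u v n) = twisted_line b u v (-n)"
proof -
  have bp: "b permutes Omega d" using perm_group_permutes[OF F b] .
  have bu': "b u \<in> Omega d" "b v \<in> Omega d" using bp u v by (auto simp: permutes_in_image)
  have bv: "b u \<noteq> b v" using uv permutes_inj[OF bp] by (auto dest: injD)
  obtain a where aF: "a \<in> F'" and a1: "a u = b u" and a2: "a (b u) = u"
    using tt u bu' bu unfolding two_transitive_def by metis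
  define B where "B c = (if c = u then b else if c = b u then inv b else (SOME p. p \<in> F \<and> p c = a c))" for c
  have "B c \<in> F \<and> B c c = a c" if c: "c \<in> Omega d" for c
    using someI_ex[OF preserves_orbits_witness[OF F po aF c, unfolded Bex_def]] b a1 a2
      permutes_inverses(2)[OF bp] perm_group_inv[OF F b]
    unfolding B_def by auto
  then interpret root_aut_data d a B
    by unfold_locales (use perm_group_permutes[OF F'] aF perm_group_permutes[OF F] in auto)
  have Bu: "B u = b" and Bbu: "B (b u) = inv b" using bu unfolding B_def by auto
  have "R (twisted_line b u v n) = twisted_line b u v (-n)" for n
  proof -
    consider "n = 0" | k where "nat n = Suc k" "n > 0" | k where "nat (-n) = Suc k" "n < 0"
      by (metis gr0_implies_Suc linorder_neqE_linordered_idom neg_0_less_iff_less zero_less_nat_eq)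
    then show ?thesis
    proof cases
      case (2 k)
      have "u # alt_word v u k \<in> verts d" using alt_word_in_verts[OF u v uv, of "Suc k"] by simp
      then show ?thesis using 2 root_aut_Cons a1 Bu by (simp add: twisted_line_def map_alt_word)
    next
      case (3 k)
      have "b u # alt_word (b v) (b u) k \<in> verts d" using alt_word_in_verts[OF bu' bv, of "Suc k"] by simp
      then show ?thesis using 3 root_aut_Cons a2 Bbu permutes_inverses[OF bp]
        by (simp add: twisted_line_def map_alt_word)
    qed (simp add: twisted_line_def root_aut_Nil)
  qed
  moreover have "R \<in> GFF d F F'" by (rule root_aut_GFF) (use aF \<open>\<And>c. c \<in> Omega d \<Longrightarrow> _\<close> FF in auto)
  ultimately show ?thesis by blast
qed

lemma lmul_twisted_line:
  assumes u: "u \<in> Omega d" and v: "v \<in> Omega d" and uv: "u \<noteq> v"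
    and b: "b permutes Omega d" and bvu: "b v = u"
  shows "lmul d u (twisted_line b u v n) = twisted_line b v u (n - 1)"
proof -
  have bu': "b u \<in> Omega d" using b u by (auto simp: permutes_in_image)
  have buu: "b u \<noteq> u" using uv permutes_inj[OF b] bvu by (auto dest: injD)
  consider "n = 0" | k where "nat n = Suc k" "n > 0" | k where "nat (-n) = Suc k" "n < 0"
    by (metis gr0_implies_Suc linorder_neqE_linordered_idom neg_0_less_iff_less zero_less_nat_eq)
  then show ?thesis
  proof cases
    case (2 k)
    moreover have "u # alt_word v u k \<in> verts d" using alt_word_in_verts[OF u v uv, of "Suc k"] by simp
    moreover have "nat (n - 1) = k" using 2 by simp
    ultimately show ?thesis by (simp add: twisted_line_def lmul_def)
  next
    case (3 k)
    moreover have "b u # alt_word u (b u) k \<in> verts d"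
      using alt_word_in_verts[OF bu' u buu, of "Suc k"] by simp
    moreover have "nat (1 - n) = Suc (Suc k)" using 3 by simp
    ultimately show ?thesis using bvu buu by (simp add: twisted_line_def lmul_def)
  qed (simp add: twisted_line_def lmul_Nil bvu)
qed

text \<open>Conjugating the reflection of the line x y x \<dots> by w \<mapsto> y w gives the reflection of the
  line y x y \<dots> at its vertex [y] = l 1.\<close>

lemma twisted_line_translation:
  assumes F: "perm_group d F" and F': "perm_group d F'" and FF: "F \<subseteq> F'"
    and po: "preserves_orbits d F F'" and tt: "two_transitive d F'"
    and b: "b \<in> F" and x: "x \<in> Omega d" and bx: "b x \<noteq> x"
  defines "l \<equiv> twisted_line b (b x) x"
  shows "\<exists>T\<in>GFF d F F'. \<forall>n. T (l n) = l (n + 2)"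
proof -
  define y where "y = b x"
  have bp: "b permutes Omega d" using perm_group_permutes[OF F b] .
  have y: "y \<in> Omega d" "b y \<noteq> y" "x \<noteq> y"
    using x bx permutes_inj[OF bp] permutes_in_image[OF bp] unfolding y_def by (auto dest: injD)
  obtain R0 where R0: "R0 \<in> GFF d F F'" "\<And>n. R0 (l n) = l (-n)"
    using twisted_line_reflection[OF F F' FF po tt y(1) x y(3)[symmetric] b y(2)]
    unfolding l_def y_def by blast
  obtain R2 where R2: "R2 \<in> GFF d F F'" "\<And>n. R2 (twisted_line b x y n) = twisted_line b x y (-n)"
    using twisted_line_reflection[OF F F' FF po tt x y(1) y(3) b bx] by blast
  define L where "L = lmul d y"
  have L: "L (l n) = twisted_line b x y (n - 1)" for n
    unfolding L_def l_def y_def[symmetric]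
    by (rule lmul_twisted_line[OF y(1) x y(3)[symmetric] bp]) (simp add: y_def)
  have "l n \<in> verts d" for n
    using twisted_line_geodesic[OF y(1) x y(3)[symmetric] bp y(2)] unfolding l_def y_def geodesic_line_def
    by blast
  then have L': "L (twisted_line b x y n) = l (n + 1)" for n
    using L[of "n + 1"] lmul_lmul[OF y(1)] unfolding L_def by (metis add_diff_cancel_right')
  have "L \<circ> R2 \<circ> L \<circ> R0 \<in> GFF d F F'"
    using GFF_comp[OF F F'] lmul_GFF[OF F F' y(1)] R0(1) R2(1) unfolding L_def by blast
  moreover have "(L \<circ> R2 \<circ> L \<circ> R0) (l n) = l (n + 2)" for n
    using L L' R0(2) R2(2) by (simp add: add.commute)
  ultimately show ?thesis by blast
qed

section \<open>Stabilisers of the line in the even subgroup\<close>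

lemma line_stabilizer_Gplus:
  assumes l: "geodesic_line d l" and k: "k \<in> GFF d F F'"
    and kl: "\<forall>n. k (l n) = l (s * n + t)" and s: "s = 1 \<or> s = -1" and t: "even t"
  shows "k \<in> Gplus d F F' \<and> k ` range l = range l"
proof
  have "int (tdist (l 0) (k (l 0))) = \<bar>t\<bar>" using l kl unfolding geodesic_line_def by simp
  then have "even (tdist (l 0) (k (l 0)))" using t by presburger
  then show "k \<in> Gplus d F F'" using l k unfolding Gplus_def geodesic_line_def by blast
  have "l m \<in> k ` range l" for m
  proof -
    have "s * (s * (m - t)) + t = m" using s by auto
    then show ?thesis using kl by (metis rangeI image_eqI)
  qed
  then show "k ` range l = range l" using kl by auto
qed

lemma even_translations_GFF:
  fixes l :: "int \<Rightarrow> nat list"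
  assumes F: "perm_group d F" and F': "perm_group d F'"
    and R: "R \<in> GFF d F F'" "\<And>n. R (l n) = l (-n)"
    and T: "T \<in> GFF d F F'" "\<And>n. T (l n) = l (n + 2)"
  shows "\<exists>k\<in>GFF d F F'. \<forall>n. k (l n) = l (n + 2 * m)"
proof (induction m rule: int_induct[where k = 0])
  case base
  show ?case using id_GFF[OF F F'] by (intro bexI[of _ id]) simp_all
next
  case (step1 i)
  then obtain k where "k \<in> GFF d F F'" "\<forall>n. k (l n) = l (n + 2 * i)" by blast
  then show ?case using GFF_comp[OF F F' T(1)] T(2) by (intro bexI[of _ "T \<circ> k"]) (auto simp: algebra_simps)
next
  case (step2 i)
  then obtain k where "k \<in> GFF d F F'" "\<forall>n. k (l n) = l (n + 2 * i)" by blast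
  moreover have "R \<circ> T \<circ> R \<in> GFF d F F'" using GFF_comp[OF F F'] R(1) T(1) by blast
  ultimately show ?case using GFF_comp[OF F F'] R(2) T(2)
    by (intro bexI[of _ "R \<circ> T \<circ> R \<circ> k"]) (auto simp: algebra_simps)
qed

lemma geom_edges_line:
  assumes "geodesic_line d l" "e \<in> geom_edges (range l)"
  shows "\<exists>n. e = {l n, l (n + 1)}"
proof -
  obtain p q where e: "e = {l p, l q}" and "adj (l p) (l q)"
    using assms(2) unfolding geom_edges_def by blast
  then have "\<bar>p - q\<bar> = 1" using assms(1) tdist_adj unfolding geodesic_line_def by (metis of_nat_1)
  then have "q = p + 1 \<or> p = q + 1" by linarith
  then show ?thesis using e by (metis insert_commute)
qed

lemma line_edge_transitive:
  assumes l: "geodesic_line d l" and F: "perm_group d F" and F': "perm_group d F'"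
    and R: "R \<in> GFF d F F'" "\<And>n. R (l n) = l (-n)"
    and T: "T \<in> GFF d F F'" "\<And>n. T (l n) = l (n + 2)"
    and e: "e \<in> geom_edges (range l)" and e': "e' \<in> geom_edges (range l)"
  shows "\<exists>k\<in>Gplus d F F'. k ` range l = range l \<and> k ` e = e'"
proof -
  obtain n n' where n: "e = {l n, l (n + 1)}" and n': "e' = {l n', l (n' + 1)}"
    using geom_edges_line[OF l] e e' by blast
  show ?thesis
  proof (cases "even (n' - n)")
    case True
    then obtain m where m: "n' - n = 2 * m" by (metis evenE)
    obtain k where k: "k \<in> GFF d F F'" "\<forall>j. k (l j) = l (j + 2 * m)"
      using even_translations_GFF[OF F F' R T] by blast
    have "k \<in> Gplus d F F' \<and> k ` range l = range l"
      using line_stabilizer_Gplus[OF l k(1), of 1 "2 * m"] k(2) by simp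
    moreover have "k ` e = e'" using n n' k(2) m by (simp add: algebra_simps)
    ultimately show ?thesis by blast
  next
    case False
    then obtain m where m: "n' + n + 1 = 2 * m" by (metis evenE odd_add odd_one even_diff)
    obtain k where k: "k \<in> GFF d F F'" "\<forall>j. k (l j) = l (j + 2 * m)"
      using even_translations_GFF[OF F F' R T] by blast
    have kR: "\<And>j. (k \<circ> R) (l j) = l (-1 * j + 2 * m)" using k(2) R(2) by simp
    have "k \<circ> R \<in> Gplus d F F' \<and> (k \<circ> R) ` range l = range l"
      by (rule line_stabilizer_Gplus[OF l GFF_comp[OF F F' k(1) R(1)], where s = "-1" and t = "2 * m"])
         (use kR in auto)
    moreover have "(k \<circ> R) ` e = e'"
    proof -
      have "(k \<circ> R) ` e = {(k \<circ> R) (l n), (k \<circ> R) (l (n + 1))}" using n by simp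
      also have "\<dots> = {l (-1 * n + 2 * m), l (-1 * (n + 1) + 2 * m)}" by (simp only: kR)
      also have "\<dots> = e'"
      proof -
        have "-1 * n + 2 * m = n' + 1" "-1 * (n + 1) + 2 * m = n'" using m by simp_all
        then show ?thesis using n' by (metis insert_commute)
      qed
      finally show ?thesis .
    qed
    ultimately show ?thesis by blast
  qed
qed

theorem mainTheorem8:
  fixes d :: nat and F F' :: "(nat \<Rightarrow> nat) set"
  assumes "d \<ge> 3"
    and "perm_group d F" and "perm_group d F'" and "F \<subseteq> F'"
    and "preserves_orbits d F F'"
    and "F \<noteq> {id}"
    and "two_transitive d F'"
  shows "\<exists>l. geodesic_line d l \<and>
           (\<exists>g\<in>Gplus d F F'. g ` range l = range l \<and> (\<forall>n. g (l n) = l (n + 2))) \<and>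
           (\<exists>h\<in>Gplus d F F'. h ` range l = range l \<and>
               (\<exists>n0. h (l n0) = l n0 \<and> (\<forall>n. h (l n) = l (2 * n0 - n)))) \<and>
           (\<forall>e\<in>geom_edges (range l). \<forall>e'\<in>geom_edges (range l).
               \<exists>k\<in>Gplus d F F'. k ` range l = range l \<and> k ` e = e')"
proof -
  note F = assms(2) and F' = assms(3) and G = assms(2-5,7)
  obtain b x where b: "b \<in> F" and x: "x \<in> Omega d" "b x \<noteq> x"
    using perm_group_nontrivial_moves[OF F assms(6)] .
  define l where "l = twisted_line b (b x) x"
  have bp: "b permutes Omega d" using perm_group_permutes[OF F b] .
  have bx: "b x \<in> Omega d" "b (b x) \<noteq> b x"
    using x permutes_in_image[OF bp] permutes_inj[OF bp] by (auto dest: injD)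
  have l: "geodesic_line d l"
    unfolding l_def using twisted_line_geodesic[OF bx(1) x(1) x(2) bp bx(2)] .
  obtain R where R: "R \<in> GFF d F F'" "\<And>n. R (l n) = l (-n)"
    using twisted_line_reflection[OF G bx(1) x(1) x(2) b bx(2)] unfolding l_def by blast
  obtain T where T: "T \<in> GFF d F F'" "\<And>n. T (l n) = l (n + 2)"
    using twisted_line_translation[OF G b x] unfolding l_def by blast
  have "R \<in> Gplus d F F' \<and> R ` range l = range l"
    using line_stabilizer_Gplus[OF l R(1), where s = "-1" and t = 0] R(2) by simp
  then have "\<exists>h\<in>Gplus d F F'. h ` range l = range l \<and>
               (\<exists>n0. h (l n0) = l n0 \<and> (\<forall>n. h (l n) = l (2 * n0 - n)))"
    using R(2) by (intro bexI[of _ R] conjI exI[of _ 0]) auto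
  moreover have "T \<in> Gplus d F F' \<and> T ` range l = range l"
    using line_stabilizer_Gplus[OF l T(1), where s = 1 and t = 2] T(2) by simp
  ultimately show ?thesis
    using l T(2) line_edge_transitive[OF l F F' R T] by blast
qed

end
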